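(* Let $\mathbb{A}$ be a finite non-empty set, $\mu$ the Bernoulli measure on $\mathbb{A}^\omega$, and $\varphi:\mathbb{A}^+\to C$ any finite coloring. Then for $\mu$-almost every $x\in\mathbb{A}^\omega$ there exists $y\in\Omega(x)$ which admits a $\varphi$-ultra monochromatic factorization.
   Context: The Bernoulli measure $\mu$ on $\mathbb{A}^\omega$ (product topology, $\mathbb{A}$ discrete) is the unique measure with $\mu([a_0,\dots,a_n])=d^{-(n+1)}$, $d=\mathrm{card}(\mathbb{A})$, where $[a_0,\dots,a_n]=\{x: x_i=a_i,\ 0\le i\le n\}$. $\mathrm{Fact}(x)$ is the set of non-empty finite factors of $x$, and $\Omega(x)=\{y\in\mathbb{A}^\omega:\mathrm{Fact}(y)\subseteq\mathrm{Fact}(x)\}$. A factorization $y=V_0V_1V_2\cdots$ with all $V_i\in\mathbb{A}^+$ is $\varphi$-ultra monochromatic if there is $c\in C$ such that for all $k\ge1$, all $0\le n_1<\cdots<n_k$ and all permutations $\sigma$ of $\{1,\dots,k\}$, $\varphi(V_{n_{\sigma(1)}}\cdots V_{n_{\sigma(k)}})=c$. *)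

theory Defs
  imports "HOL-Probability.Probability" "HOL-Combinatorics.Permutations"
begin

text \<open>Infinite words over the alphabet 'a are functions nat => 'a; finite words are lists.
  The alphabet is the (finite, nonempty) type 'a.\<close>

text \<open>Bernoulli measure: the product of uniform measures on the alphabet; it assigns
  measure d^-(n+1) to each cylinder [a_0,...,a_n].\<close>
definition bernoulli_measure :: "(nat \<Rightarrow> 'a::finite) measure" where
  "bernoulli_measure = PiM UNIV (\<lambda>_. uniform_count_measure (UNIV :: 'a set))"

definition Fact :: "(nat \<Rightarrow> 'a) \<Rightarrow> 'a list set" where
  "Fact x = {w. w \<noteq> [] \<and> (\<exists>i. w = map x [i..<i + length w])}"

definition Omega :: "(nat \<Rightarrow> 'a) \<Rightarrow> (nat \<Rightarrow> 'a) set" where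
  "Omega x = {y. Fact y \<subseteq> Fact x}"

text \<open>y = V 0 V 1 V 2 ... with all V n non-empty.\<close>
definition is_factorization :: "(nat \<Rightarrow> 'a) \<Rightarrow> (nat \<Rightarrow> 'a list) \<Rightarrow> bool" where
  "is_factorization y V \<longleftrightarrow>
     (\<forall>n. V n \<noteq> []) \<and>
     (\<forall>n. map y [(\<Sum>k<n. length (V k))..<(\<Sum>k<n. length (V k)) + length (V n)] = V n)"

definition ultra_monochromatic :: "('a list \<Rightarrow> 'c) \<Rightarrow> 'c set \<Rightarrow> (nat \<Rightarrow> 'a list) \<Rightarrow> bool" where
  "ultra_monochromatic \<phi> C V \<longleftrightarrow>
     (\<exists>c\<in>C. \<forall>k::nat. k \<ge> 1 \<longrightarrow>
        (\<forall>n::nat \<Rightarrow> nat. strict_mono_on {1..k} n \<longrightarrow>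
          (\<forall>\<sigma>. \<sigma> permutes {1..k} \<longrightarrow>
             \<phi> (concat (map (\<lambda>i. V (n (\<sigma> i))) [1..<k+1])) = c)))"

end

theory Submission
  imports Defs
begin

text \<open>
  Fix a letter \<open>a\<close>. Almost every \<open>x\<close> contains every block \<open>a\<^sup>j\<close> (disjoint blocks of length
  \<open>j\<close> are independent and each equals \<open>a\<^sup>j\<close> with probability \<open>d\<^sup>-\<^sup>j > 0\<close>), so the constant word
  \<open>a\<^sup>\<omega>\<close> lies in \<open>\<Omega>(x)\<close>. A factorization of \<open>a\<^sup>\<omega>\<close> into blocks \<open>a\<^bsup>l\<^sub>n\<^esup>\<close> is
  ultra monochromatic as soon as the colouring \<open>n \<mapsto> \<phi>(a\<^sup>n)\<close> is constant on all finite sums of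
  distinct \<open>l\<^sub>n\<close>, since concatenating blocks in any order only adds their lengths. Such \<open>l\<close>
  exists by Hindman's theorem, which follows by Galvin and Glazer's method: an idempotent
  non-principal ultrafilter \<open>p = p + p\<close> on \<open>\<nat>\<close> yields, for each \<open>A \<in> p\<close>, a sequence all of whose
  finite sums lie in \<open>A\<close>.
\<close>

section \<open>Filters and ultrafilters\<close>

definition proper_filter :: "'a set set \<Rightarrow> bool" where
  "proper_filter F \<longleftrightarrow> UNIV \<in> F \<and> (\<forall>A B. A \<in> F \<longrightarrow> A \<subseteq> B \<longrightarrow> B \<in> F)
     \<and> (\<forall>A B. A \<in> F \<longrightarrow> B \<in> F \<longrightarrow> A \<inter> B \<in> F) \<and> {} \<notin> F"

definition ultrafilter :: "'a set set \<Rightarrow> bool" where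
  "ultrafilter U \<longleftrightarrow> proper_filter U \<and> (\<forall>A. A \<in> U \<or> - A \<in> U)"

lemma proper_filterD:
  assumes "proper_filter F"
  shows proper_filter_UNIV: "UNIV \<in> F"
    and proper_filter_mono: "A \<in> F \<Longrightarrow> A \<subseteq> B \<Longrightarrow> B \<in> F"
    and proper_filter_Int: "A \<in> F \<Longrightarrow> B \<in> F \<Longrightarrow> A \<inter> B \<in> F"
    and proper_filter_empty: "{} \<notin> F"
  using assms unfolding proper_filter_def by blast+

lemma ultrafilter_proper_filter: "ultrafilter U \<Longrightarrow> proper_filter U"
  by (simp add: ultrafilter_def)

lemma ultrafilter_Compl_iff:
  assumes "ultrafilter U"
  shows "- A \<in> U \<longleftrightarrow> A \<notin> U"
proof -
  have "A \<inter> - A \<notin> U"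
    using proper_filter_empty[OF ultrafilter_proper_filter[OF assms]] by simp
  then have "\<not> (A \<in> U \<and> - A \<in> U)"
    using proper_filter_Int[OF ultrafilter_proper_filter[OF assms]] by blast
  then show ?thesis
    using assms by (auto simp: ultrafilter_def)
qed

lemma ultrafilter_subset_imp_eq:
  assumes "ultrafilter U" "ultrafilter V" "U \<subseteq> V"
  shows "U = V"
proof
  show "V \<subseteq> U"
  proof
    fix A assume "A \<in> V"
    then have "- A \<notin> U"
      using assms(3) ultrafilter_Compl_iff[OF assms(2)] by blast
    then show "A \<in> U"
      using ultrafilter_Compl_iff[OF assms(1)] by blast
  qed
qed (rule assms(3))

lemma proper_filter_Union_chain:
  assumes "C \<in> chains S" "S \<subseteq> {F. proper_filter F}" "C \<noteq> {}"
  shows "proper_filter (\<Union>C)"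
proof -
  have C: "\<And>F. F \<in> C \<Longrightarrow> proper_filter F"
    using assms(1,2) chainsD2 by blast
  show ?thesis
    unfolding proper_filter_def
  proof (intro conjI allI impI)
    show "UNIV \<in> \<Union>C"
      using assms(3) C proper_filter_UNIV by blast
    show "B \<in> \<Union>C" if "A \<in> \<Union>C" "A \<subseteq> B" for A B
      using that C proper_filter_mono by blast
    show "A \<inter> B \<in> \<Union>C" if AB: "A \<in> \<Union>C" "B \<in> \<Union>C" for A B
    proof -
      obtain F G where "F \<in> C" "A \<in> F" "G \<in> C" "B \<in> G"
        using AB by blast
      moreover have "F \<subseteq> G \<or> G \<subseteq> F"
        using chainsD[OF assms(1)] \<open>F \<in> C\<close> \<open>G \<in> C\<close> by blast
      ultimately show ?thesis
        using C proper_filter_Int by (metis UnionI subsetD)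
    qed
    show "{} \<notin> \<Union>C"
      using C proper_filter_empty by blast
  qed
qed

lemma proper_filter_adjoin:
  assumes "proper_filter F" "\<And>f. f \<in> F \<Longrightarrow> f \<inter> A \<noteq> {}"
  shows "proper_filter {B. \<exists>f\<in>F. f \<inter> A \<subseteq> B}"
  unfolding proper_filter_def
proof (intro conjI allI impI)
  show "UNIV \<in> {B. \<exists>f\<in>F. f \<inter> A \<subseteq> B}"
    using proper_filter_UNIV[OF assms(1)] by blast
  show "B' \<in> {B. \<exists>f\<in>F. f \<inter> A \<subseteq> B}" if "B \<in> {B. \<exists>f\<in>F. f \<inter> A \<subseteq> B}" "B \<subseteq> B'" for B B'
    using that by blast
  show "B \<inter> B' \<in> {B. \<exists>f\<in>F. f \<inter> A \<subseteq> B}"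
    if BB': "B \<in> {B. \<exists>f\<in>F. f \<inter> A \<subseteq> B}" "B' \<in> {B. \<exists>f\<in>F. f \<inter> A \<subseteq> B}" for B B'
  proof -
    obtain f f' where "f \<in> F" "f \<inter> A \<subseteq> B" "f' \<in> F" "f' \<inter> A \<subseteq> B'"
      using BB' by blast
    then show ?thesis
      using proper_filter_Int[OF assms(1), of f f'] by (intro CollectI bexI[of _ "f \<inter> f'"]) auto
  qed
  show "{} \<notin> {B. \<exists>f\<in>F. f \<inter> A \<subseteq> B}"
    using assms(2) by blast
qed

lemma ultrafilter_extending:
  assumes "proper_filter F"
  obtains U where "ultrafilter U" "F \<subseteq> U"
proof -
  let ?P = "{G. proper_filter G \<and> F \<subseteq> G}"
  have "\<exists>U\<in>?P. \<forall>G\<in>C. G \<subseteq> U" if C: "C \<in> chains ?P" for C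
  proof (cases "C = {}")
    case True
    then show ?thesis
      using assms by blast
  next
    case False
    have "proper_filter (\<Union>C)"
      by (rule proper_filter_Union_chain[OF C _ False]) blast
    moreover obtain G where "G \<in> C"
      using False by blast
    then have "F \<subseteq> \<Union>C"
      using C chainsD2 by blast
    ultimately show ?thesis
      by blast
  qed
  then obtain U where "U \<in> ?P" and maximal: "\<forall>G\<in>?P. U \<subseteq> G \<longrightarrow> G = U"
    using Zorn_Lemma2[of ?P] by blast
  then have U: "proper_filter U" "F \<subseteq> U"
    by simp_all
  have "A \<in> U \<or> - A \<in> U" for A
  proof (cases "\<exists>u\<in>U. u \<inter> A = {}")
    case True
    then show ?thesis
      using proper_filter_mono[OF U(1)] by blast
  next
    case False
    let ?G = "{B. \<exists>u\<in>U. u \<inter> A \<subseteq> B}"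
    have "proper_filter ?G"
      using False by (intro proper_filter_adjoin[OF U(1)]) blast
    moreover have "U \<subseteq> ?G"
      by blast
    ultimately have "?G = U"
      using maximal U(2) by blast
    moreover have "A \<in> ?G"
      using proper_filter_UNIV[OF U(1)] by blast
    ultimately show ?thesis
      by blast
  qed
  then show thesis
    using U that by (auto simp: ultrafilter_def)
qed

lemma ultrafilter_avoiding:
  assumes "proper_filter F" "A \<notin> F"
  obtains U where "ultrafilter U" "F \<subseteq> U" "A \<notin> U"
proof -
  let ?G = "{B. \<exists>f\<in>F. f \<inter> - A \<subseteq> B}"
  have "f \<inter> - A \<noteq> {}" if "f \<in> F" for f
  proof
    assume "f \<inter> - A = {}"
    then have "f \<subseteq> A"
      by blast
    then show False
      using proper_filter_mono[OF assms(1) that] assms(2) by blast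
  qed
  then have "proper_filter ?G"
    by (rule proper_filter_adjoin[OF assms(1)])
  then obtain U where U: "ultrafilter U" "?G \<subseteq> U"
    by (rule ultrafilter_extending)
  have "F \<subseteq> ?G"
    by blast
  moreover have "- A \<in> ?G"
    using proper_filter_UNIV[OF assms(1)] by blast
  ultimately show thesis
    using that[OF U(1)] U(2) ultrafilter_Compl_iff[OF U(1)] by blast
qed

lemma ultrafilter_finite_UN:
  assumes "ultrafilter U" "finite I" "(\<Union>i\<in>I. B i) \<in> U"
  obtains i where "i \<in> I" "B i \<in> U"
  using assms(2,3)
proof (induction I rule: finite_induct)
  case empty
  then show ?case
    using proper_filter_empty[OF ultrafilter_proper_filter[OF assms(1)]] by simp
next
  case (insert i I)
  have F: "proper_filter U"
    using assms(1) by (rule ultrafilter_proper_filter)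
  show ?case
  proof (cases "B i \<in> U")
    case True
    then show ?thesis using insert.prems by blast
  next
    case False
    then have "- B i \<inter> (\<Union>i\<in>insert i I. B i) \<in> U"
      using ultrafilter_Compl_iff[OF assms(1)] proper_filter_Int[OF F _ insert.prems(2)] by blast
    moreover have "- B i \<inter> (\<Union>i\<in>insert i I. B i) \<subseteq> (\<Union>i\<in>I. B i)"
      by blast
    ultimately have "(\<Union>i\<in>I. B i) \<in> U"
      by (rule proper_filter_mono[OF F])
    then show ?thesis
      using insert.IH insert.prems(1) by blast
  qed
qed

section \<open>The semigroup of ultrafilters on \<open>\<nat>\<close>\<close>

text \<open>\<open>shift_set A n\<close> is \<open>A - n\<close>, and \<open>uf_plus p q\<close> is the sum \<open>p + q\<close> in \<open>\<beta>\<nat>\<close>: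
  \<open>A \<in> p + q\<close> iff \<open>{n. A - n \<in> q} \<in> p\<close>.\<close>

definition shift_set :: "nat set \<Rightarrow> nat \<Rightarrow> nat set" where
  "shift_set A n = {m. m + n \<in> A}"

definition shifts_in :: "nat set set \<Rightarrow> nat set \<Rightarrow> nat set" where
  "shifts_in q A = {n. shift_set A n \<in> q}"

definition uf_plus :: "nat set set \<Rightarrow> nat set set \<Rightarrow> nat set set" where
  "uf_plus p q = {A. shifts_in q A \<in> p}"

definition cofinite_sets :: "nat set set" where
  "cofinite_sets = {A. finite (- A)}"

lemma shift_set_shift_set: "shift_set (shift_set A n) m = shift_set A (m + n)"
  by (simp add: shift_set_def add.assoc)

lemma shifts_in_UNIV: "proper_filter q \<Longrightarrow> shifts_in q UNIV = UNIV"
  using proper_filter_UNIV by (auto simp: shifts_in_def shift_set_def)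

lemma shifts_in_empty: "proper_filter q \<Longrightarrow> shifts_in q {} = {}"
  using proper_filter_empty by (auto simp: shifts_in_def shift_set_def)

lemma shifts_in_mono: "proper_filter q \<Longrightarrow> A \<subseteq> B \<Longrightarrow> shifts_in q A \<subseteq> shifts_in q B"
  unfolding shifts_in_def using proper_filter_mono[of q "shift_set A _" "shift_set B _"]
  by (auto simp: shift_set_def)

lemma shifts_in_Int: "proper_filter q \<Longrightarrow> shifts_in q (A \<inter> B) = shifts_in q A \<inter> shifts_in q B"
proof -
  assume q: "proper_filter q"
  have "shift_set (A \<inter> B) n = shift_set A n \<inter> shift_set B n" for n
    by (auto simp: shift_set_def)
  then show ?thesis
    unfolding shifts_in_def
    using proper_filter_Int[OF q] proper_filter_mono[OF q] by auto
qed

lemma shifts_in_Compl: "ultrafilter q \<Longrightarrow> shifts_in q (- A) = - shifts_in q A"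
proof -
  assume q: "ultrafilter q"
  have "shift_set (- A) n = - shift_set A n" for n
    by (auto simp: shift_set_def)
  then show ?thesis
    unfolding shifts_in_def using ultrafilter_Compl_iff[OF q] by auto
qed

lemma proper_filter_shifts_preimage:
  assumes "proper_filter F" "proper_filter q"
  shows "proper_filter {A. shifts_in q A \<in> F}"
  unfolding proper_filter_def
proof (intro conjI allI impI)
  show "UNIV \<in> {A. shifts_in q A \<in> F}"
    using assms by (simp add: shifts_in_UNIV proper_filter_UNIV)
  show "B \<in> {A. shifts_in q A \<in> F}" if "A \<in> {A. shifts_in q A \<in> F}" "A \<subseteq> B" for A B
    using that proper_filter_mono[OF assms(1)] shifts_in_mono[OF assms(2)] by blast
  show "A \<inter> B \<in> {A. shifts_in q A \<in> F}" if "A \<in> {A. shifts_in q A \<in> F}" "B \<in> {A. shifts_in q A \<in> F}" for A B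
    using that proper_filter_Int[OF assms(1)] by (simp add: shifts_in_Int[OF assms(2)])
  show "{} \<notin> {A. shifts_in q A \<in> F}"
    using assms by (simp add: shifts_in_empty proper_filter_empty)
qed

lemma ultrafilter_uf_plus:
  assumes "ultrafilter p" "ultrafilter q"
  shows "ultrafilter (uf_plus p q)"
  unfolding ultrafilter_def uf_plus_def
proof (intro conjI allI)
  show "proper_filter {A. shifts_in q A \<in> p}"
    using assms by (simp add: proper_filter_shifts_preimage ultrafilter_proper_filter)
  show "A \<in> {A. shifts_in q A \<in> p} \<or> - A \<in> {A. shifts_in q A \<in> p}" for A
    using assms by (simp add: shifts_in_Compl ultrafilter_Compl_iff)
qed

lemma uf_plus_assoc: "uf_plus (uf_plus p q) r = uf_plus p (uf_plus q r)"
proof -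
  have "shifts_in (uf_plus q r) A = shifts_in q (shifts_in r A)" for A
    by (auto simp: shifts_in_def uf_plus_def shift_set_shift_set) (auto simp: shift_set_def add.commute)
  then show ?thesis
    by (simp add: uf_plus_def)
qed

lemma proper_filter_cofinite_sets: "proper_filter cofinite_sets"
  unfolding proper_filter_def cofinite_sets_def by (auto intro: finite_subset)

lemma shifts_in_cofinite:
  assumes "cofinite_sets \<subseteq> q" "A \<in> cofinite_sets"
  shows "shifts_in q A = UNIV"
proof -
  have "- shift_set A n = (\<lambda>m. m + n) -` (- A)" for n
    by (auto simp: shift_set_def)
  then have "shift_set A n \<in> cofinite_sets" for n
    using assms(2) by (simp add: cofinite_sets_def finite_vimageI)
  then show ?thesis
    using assms(1) by (auto simp: shifts_in_def)
qed

lemma cofinite_sets_subset_uf_plus: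
  assumes "proper_filter p" "cofinite_sets \<subseteq> q"
  shows "cofinite_sets \<subseteq> uf_plus p q"
  using assms shifts_in_cofinite proper_filter_UNIV by (auto simp: uf_plus_def)

text \<open>The ultrafilters extending a subsemigroup filter form a closed subsemigroup of the
  remainder \<open>\<beta>\<nat> - \<nat>\<close>; enlarging the filter shrinks the semigroup.\<close>

definition subsemigroup_filter :: "nat set set \<Rightarrow> bool" where
  "subsemigroup_filter F \<longleftrightarrow> proper_filter F \<and> cofinite_sets \<subseteq> F \<and>
     (\<forall>p q. ultrafilter p \<longrightarrow> ultrafilter q \<longrightarrow> F \<subseteq> p \<longrightarrow> F \<subseteq> q \<longrightarrow> F \<subseteq> uf_plus p q)"

lemma subsemigroup_filter_cofinite_sets: "subsemigroup_filter cofinite_sets"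
  unfolding subsemigroup_filter_def
proof (intro conjI allI impI proper_filter_cofinite_sets subset_refl)
  fix p q
  assume "ultrafilter p" "ultrafilter q" "cofinite_sets \<subseteq> p" "cofinite_sets \<subseteq> q"
  then show "cofinite_sets \<subseteq> uf_plus p q"
    by (intro cofinite_sets_subset_uf_plus ultrafilter_proper_filter)
qed

lemma subsemigroup_filter_Union_chain:
  assumes "C \<in> chains {F. subsemigroup_filter F}" "C \<noteq> {}"
  shows "subsemigroup_filter (\<Union>C)"
proof -
  have C: "\<And>F. F \<in> C \<Longrightarrow> subsemigroup_filter F"
    using assms(1) chainsD2 by blast
  have "proper_filter (\<Union>C)"
    by (rule proper_filter_Union_chain[OF assms(1) _ assms(2)]) (auto simp: subsemigroup_filter_def)
  moreover obtain G where "G \<in> C"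
    using assms(2) by blast
  then have "cofinite_sets \<subseteq> \<Union>C"
    using C[of G] by (auto simp: subsemigroup_filter_def)
  moreover have "\<Union>C \<subseteq> uf_plus p q"
    if pq: "ultrafilter p" "ultrafilter q" "\<Union>C \<subseteq> p" "\<Union>C \<subseteq> q" for p q
  proof
    fix A assume "A \<in> \<Union>C"
    then obtain G where G: "G \<in> C" "A \<in> G"
      by blast
    then have "G \<subseteq> p" "G \<subseteq> q"
      using pq by blast+
    then show "A \<in> uf_plus p q"
      using C[OF G(1)] pq(1,2) G(2) unfolding subsemigroup_filter_def by blast
  qed
  ultimately show ?thesis
    by (simp add: subsemigroup_filter_def)
qed

lemma maximal_subsemigroup_filter_exists:
  "\<exists>F. subsemigroup_filter F \<and> (\<forall>G. subsemigroup_filter G \<longrightarrow> F \<subseteq> G \<longrightarrow> G = F)"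
proof -
  have "\<exists>U\<in>{F. subsemigroup_filter F}. \<forall>G\<in>C. G \<subseteq> U" if C: "C \<in> chains {F. subsemigroup_filter F}" for C
  proof (cases "C = {}")
    case True
    then show ?thesis
      using subsemigroup_filter_cofinite_sets by blast
  next
    case False
    then show ?thesis
      using subsemigroup_filter_Union_chain[OF C False] by blast
  qed
  then obtain F where "F \<in> {F. subsemigroup_filter F}"
    and "\<forall>G\<in>{F. subsemigroup_filter F}. F \<subseteq> G \<longrightarrow> G = F"
    using Zorn_Lemma2[of "{F. subsemigroup_filter F}"] by blast
  then show ?thesis
    by (intro exI[of _ F]) simp
qed

text \<open>An ultrafilter \<open>q\<close> extends \<open>left_quotient_filter F p r\<close> iff it extends \<open>F\<close> and
  \<open>uf_plus q p\<close> extends \<open>r\<close>.\<close>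

definition left_quotient_filter :: "nat set set \<Rightarrow> nat set set \<Rightarrow> nat set set \<Rightarrow> nat set set" where
  "left_quotient_filter F p r = {B. \<exists>f\<in>F. \<exists>A\<in>r. f \<inter> shifts_in p A \<subseteq> B}"

lemma proper_filter_left_quotient_filter:
  assumes F: "proper_filter F" and p: "ultrafilter p" and r: "ultrafilter r"
    and Fr: "{A. shifts_in p A \<in> F} \<subseteq> r"
  shows "proper_filter (left_quotient_filter F p r)"
  unfolding proper_filter_def left_quotient_filter_def
proof (intro conjI allI impI)
  have r': "proper_filter r"
    using r by (rule ultrafilter_proper_filter)
  show "UNIV \<in> {B. \<exists>f\<in>F. \<exists>A\<in>r. f \<inter> shifts_in p A \<subseteq> B}"
    using proper_filter_UNIV[OF F] proper_filter_UNIV[OF r'] by blast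
  show "B' \<in> {B. \<exists>f\<in>F. \<exists>A\<in>r. f \<inter> shifts_in p A \<subseteq> B}"
    if "B \<in> {B. \<exists>f\<in>F. \<exists>A\<in>r. f \<inter> shifts_in p A \<subseteq> B}" "B \<subseteq> B'" for B B'
    using that by blast
  show "B \<inter> B' \<in> {B. \<exists>f\<in>F. \<exists>A\<in>r. f \<inter> shifts_in p A \<subseteq> B}"
    if BB': "B \<in> {B. \<exists>f\<in>F. \<exists>A\<in>r. f \<inter> shifts_in p A \<subseteq> B}"
      "B' \<in> {B. \<exists>f\<in>F. \<exists>A\<in>r. f \<inter> shifts_in p A \<subseteq> B}" for B B'
  proof -
    obtain f A f' A' where "f \<in> F" "A \<in> r" "f \<inter> shifts_in p A \<subseteq> B"
      and "f' \<in> F" "A' \<in> r" "f' \<inter> shifts_in p A' \<subseteq> B'"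
      using BB' by blast
    moreover have "(f \<inter> f') \<inter> shifts_in p (A \<inter> A') = (f \<inter> shifts_in p A) \<inter> (f' \<inter> shifts_in p A')"
      using shifts_in_Int[OF ultrafilter_proper_filter[OF p]] by auto
    ultimately show ?thesis
      using proper_filter_Int[OF F, of f f'] proper_filter_Int[OF r', of A A']
      by (intro CollectI bexI[of _ "f \<inter> f'"] bexI[of _ "A \<inter> A'"]) auto
  qed
  show "{} \<notin> {B. \<exists>f\<in>F. \<exists>A\<in>r. f \<inter> shifts_in p A \<subseteq> B}"
  proof
    assume "{} \<in> {B. \<exists>f\<in>F. \<exists>A\<in>r. f \<inter> shifts_in p A \<subseteq> B}"
    then obtain f A where f: "f \<in> F" and A: "A \<in> r" and "f \<inter> shifts_in p A \<subseteq> {}"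
      by blast
    then have "f \<subseteq> shifts_in p (- A)"
      using shifts_in_Compl[OF p] by auto
    then have "shifts_in p (- A) \<in> F"
      by (rule proper_filter_mono[OF F f])
    then have "- A \<in> r"
      using Fr by blast
    then show False
      using \<open>A \<in> r\<close> ultrafilter_Compl_iff[OF r] by blast
  qed
qed

text \<open>Ellis' argument: the closed subsemigroup \<open>K\<close> of ultrafilters extending a maximal
  subsemigroup filter \<open>F\<close> is minimal, so \<open>K + p = K\<close> for \<open>p \<in> K\<close>, and the closed subsemigroup
  \<open>{q \<in> K. q + p = p}\<close> is all of \<open>K\<close>, in particular \<open>p + p = p\<close>.\<close>

context
  fixes F p :: "nat set set"
  assumes F: "subsemigroup_filter F"
    and F_maximal: "\<And>G. subsemigroup_filter G \<Longrightarrow> F \<subseteq> G \<Longrightarrow> G = F"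
    and p: "ultrafilter p" "F \<subseteq> p"
begin

private lemma F_proper: "proper_filter F"
  using F by (simp add: subsemigroup_filter_def)

private lemma F_uf_plus: "ultrafilter q \<Longrightarrow> ultrafilter q' \<Longrightarrow> F \<subseteq> q \<Longrightarrow> F \<subseteq> q' \<Longrightarrow> F \<subseteq> uf_plus q q'"
  using F by (simp add: subsemigroup_filter_def)

private lemma subset_shifts_preimage: "F \<subseteq> {A. shifts_in p A \<in> F}"
proof
  fix A assume A: "A \<in> F"
  show "A \<in> {A. shifts_in p A \<in> F}"
  proof (rule ccontr)
    assume "A \<notin> {A. shifts_in p A \<in> F}"
    then have "shifts_in p A \<notin> F"
      by simp
    then obtain q where q: "ultrafilter q" "F \<subseteq> q" "shifts_in p A \<notin> q"
      by (rule ultrafilter_avoiding[OF F_proper])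
    have "A \<in> uf_plus q p"
      using F_uf_plus[OF q(1) p(1) q(2) p(2)] A by blast
    then show False
      using q(3) by (simp add: uf_plus_def)
  qed
qed

private lemma F_subset_left_quotient_filter: "ultrafilter r \<Longrightarrow> F \<subseteq> left_quotient_filter F p r"
  using shifts_in_UNIV[OF ultrafilter_proper_filter[OF p(1)]]
    proper_filter_UNIV[OF ultrafilter_proper_filter] by (fastforce simp: left_quotient_filter_def)

private lemma uf_plus_right_factor:
  assumes r: "ultrafilter r" "{A. shifts_in p A \<in> F} \<subseteq> r"
  obtains q where "ultrafilter q" "F \<subseteq> q" "uf_plus q p = r"
proof -
  obtain q where q: "ultrafilter q" "left_quotient_filter F p r \<subseteq> q"
    using proper_filter_left_quotient_filter[OF F_proper p(1) r] ultrafilter_extending by blast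
  have "r \<subseteq> uf_plus q p"
  proof
    fix A assume "A \<in> r"
    then have "shifts_in p A \<in> left_quotient_filter F p r"
      using proper_filter_UNIV[OF F_proper] by (auto simp: left_quotient_filter_def)
    then show "A \<in> uf_plus q p"
      using q(2) by (auto simp: uf_plus_def)
  qed
  then have "uf_plus q p = r"
    using ultrafilter_subset_imp_eq[OF r(1) ultrafilter_uf_plus[OF q(1) p(1)]] by simp
  then show thesis
    using that q(1) F_subset_left_quotient_filter[OF r(1)] q(2) by blast
qed

private lemma shifts_preimage_eq: "{A. shifts_in p A \<in> F} = F"
proof (rule F_maximal[OF _ subset_shifts_preimage])
  let ?G = "{A. shifts_in p A \<in> F}"
  have "?G \<subseteq> uf_plus r s" if rs: "ultrafilter r" "ultrafilter s" "?G \<subseteq> r" "?G \<subseteq> s" for r s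
  proof -
    obtain q where q: "ultrafilter q" "F \<subseteq> q" "uf_plus q p = s"
      using uf_plus_right_factor rs(2,4) by blast
    have "F \<subseteq> r"
      using subset_shifts_preimage rs(3) by blast
    then have "F \<subseteq> uf_plus r q"
      using F_uf_plus[OF rs(1) q(1) _ q(2)] by blast
    moreover have "uf_plus r s = uf_plus (uf_plus r q) p"
      unfolding q(3)[symmetric] by (rule uf_plus_assoc[symmetric])
    ultimately show ?thesis
      by (auto simp: uf_plus_def)
  qed
  moreover have "cofinite_sets \<subseteq> ?G"
    using F p(2) shifts_in_cofinite proper_filter_UNIV[OF F_proper]
    by (auto simp: subsemigroup_filter_def)
  moreover have "proper_filter ?G"
    using proper_filter_shifts_preimage[OF F_proper ultrafilter_proper_filter[OF p(1)]] .
  ultimately show "subsemigroup_filter ?G"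
    by (simp add: subsemigroup_filter_def)
qed

private lemma left_quotient_filter_self_eq: "left_quotient_filter F p p = F"
proof (rule F_maximal[OF _ F_subset_left_quotient_filter[OF p(1)]])
  let ?H = "left_quotient_filter F p p"
  have H: "proper_filter ?H"
    using proper_filter_left_quotient_filter[OF F_proper p(1) p(1)] shifts_preimage_eq p(2) by simp
  have p_subset: "p \<subseteq> uf_plus t p" if "?H \<subseteq> t" for t
  proof
    fix A assume "A \<in> p"
    then have "shifts_in p A \<in> ?H"
      using proper_filter_UNIV[OF F_proper] by (auto simp: left_quotient_filter_def)
    then show "A \<in> uf_plus t p"
      using that by (auto simp: uf_plus_def)
  qed
  have "cofinite_sets \<subseteq> ?H"
    using F F_subset_left_quotient_filter[OF p(1)] by (auto simp: subsemigroup_filter_def)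
  moreover have "?H \<subseteq> uf_plus t1 t2"
    if t: "ultrafilter t1" "ultrafilter t2" "?H \<subseteq> t1" "?H \<subseteq> t2" for t1 t2
  proof
    fix B assume "B \<in> ?H"
    then obtain f A where fA: "f \<in> F" "A \<in> p" "f \<inter> shifts_in p A \<subseteq> B"
      by (auto simp: left_quotient_filter_def)
    have t12: "proper_filter (uf_plus t1 t2)"
      using ultrafilter_proper_filter[OF ultrafilter_uf_plus[OF t(1,2)]] .
    have "uf_plus t2 p = p"
      using ultrafilter_subset_imp_eq[OF p(1) ultrafilter_uf_plus[OF t(2) p(1)]] p_subset t(4) by simp
    then have "A \<in> uf_plus (uf_plus t1 t2) p"
      using p_subset[OF t(3)] fA(2) uf_plus_assoc by auto
    then have "shifts_in p A \<in> uf_plus t1 t2"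
      by (simp add: uf_plus_def)
    moreover have "F \<subseteq> t1" "F \<subseteq> t2"
      using t(3,4) F_subset_left_quotient_filter[OF p(1)] by blast+
    then have "f \<in> uf_plus t1 t2"
      using F_uf_plus[OF t(1,2)] fA(1) by blast
    ultimately show "B \<in> uf_plus t1 t2"
      using proper_filter_Int[OF t12] proper_filter_mono[OF t12 _ fA(3)] by blast
  qed
  ultimately show "subsemigroup_filter ?H"
    using H by (simp add: subsemigroup_filter_def)
qed

lemma maximal_subsemigroup_filter_idempotent: "uf_plus p p = p"
proof -
  have "p \<subseteq> uf_plus p p"
  proof
    fix A assume "A \<in> p"
    then have "shifts_in p A \<in> left_quotient_filter F p p"
      using proper_filter_UNIV[OF F_proper] by (auto simp: left_quotient_filter_def)
    then show "A \<in> uf_plus p p"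
      using left_quotient_filter_self_eq p(2) by (auto simp: uf_plus_def)
  qed
  then show ?thesis
    using ultrafilter_subset_imp_eq[OF p(1) ultrafilter_uf_plus[OF p(1) p(1)]] by simp
qed

end

lemma idempotent_ultrafilter_exists:
  obtains p where "ultrafilter p" "cofinite_sets \<subseteq> p" "uf_plus p p = p"
proof -
  obtain F where F: "subsemigroup_filter F" "\<And>G. subsemigroup_filter G \<Longrightarrow> F \<subseteq> G \<Longrightarrow> G = F"
    using maximal_subsemigroup_filter_exists by blast
  have "proper_filter F"
    using F(1) by (simp add: subsemigroup_filter_def)
  then obtain p where p: "ultrafilter p" "F \<subseteq> p"
    by (rule ultrafilter_extending)
  have "cofinite_sets \<subseteq> p"
    using F(1) p(2) by (auto simp: subsemigroup_filter_def)
  then show thesis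
    using that p(1) maximal_subsemigroup_filter_idempotent[OF F p] by blast
qed

section \<open>Hindman's theorem\<close>

definition star_set :: "nat set set \<Rightarrow> nat set \<Rightarrow> nat set" where
  "star_set p A = A \<inter> shifts_in p A"

primrec hindman_set :: "nat set set \<Rightarrow> nat set \<Rightarrow> nat \<Rightarrow> nat set" where
  "hindman_set p A 0 = A"
| "hindman_set p A (Suc k) =
     (let S = star_set p (hindman_set p A k) in S \<inter> shift_set S (SOME n. n \<in> S))"

definition hindman_seq :: "nat set set \<Rightarrow> nat set \<Rightarrow> nat \<Rightarrow> nat" where
  "hindman_seq p A k = (SOME n. n \<in> star_set p (hindman_set p A k))"

lemma hindman_set_Suc_subset:
  "hindman_set p A (Suc k) \<subseteq> shift_set (star_set p (hindman_set p A k)) (hindman_seq p A k)"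
  by (simp add: hindman_seq_def Let_def)

lemma hindman_set_antimono: "k \<le> l \<Longrightarrow> hindman_set p A l \<subseteq> hindman_set p A k"
proof (induction l rule: dec_induct)
  case (step l)
  have "hindman_set p A (Suc l) \<subseteq> hindman_set p A l"
    by (auto simp: Let_def star_set_def)
  then show ?case
    using step.IH by blast
qed simp

context
  fixes p :: "nat set set"
  assumes p: "ultrafilter p" "uf_plus p p = p"
begin

private lemma p_proper: "proper_filter p"
  using p(1) by (rule ultrafilter_proper_filter)

lemma shifts_in_mem: "A \<in> p \<Longrightarrow> shifts_in p A \<in> p"
  using p(2) by (auto simp: uf_plus_def)

lemma star_set_mem: "A \<in> p \<Longrightarrow> star_set p A \<in> p"
  unfolding star_set_def using shifts_in_mem proper_filter_Int[OF p_proper] by blast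

text \<open>This is where idempotence is used: \<open>A\<^sup>* - n = (A - n) \<inter> (A - n)\<^sup>*\<close> for \<open>n \<in> A\<^sup>*\<close>.\<close>

lemma shift_star_set_mem:
  assumes "n \<in> star_set p A"
  shows "shift_set (star_set p A) n \<in> p"
proof -
  have "shift_set (star_set p A) n = star_set p (shift_set A n)"
    by (auto simp: star_set_def shifts_in_def shift_set_def add.assoc)
  moreover have "shift_set A n \<in> p"
    using assms by (simp add: star_set_def shifts_in_def)
  ultimately show ?thesis
    using star_set_mem by simp
qed

lemma hindman_set_mem:
  assumes "A \<in> p"
  shows "hindman_set p A k \<in> p \<and> hindman_seq p A k \<in> star_set p (hindman_set p A k)"
proof -
  have some_mem: "(SOME n. n \<in> B) \<in> B" if "B \<in> p" for B
    using that proper_filter_empty[OF p_proper] by (metis ex_in_conv someI_ex)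
  show ?thesis
  proof (induction k)
    case 0
    show ?case
      using assms star_set_mem some_mem by (simp add: hindman_seq_def)
  next
    case (Suc k)
    let ?S = "star_set p (hindman_set p A k)"
    have "?S \<in> p" "shift_set ?S (hindman_seq p A k) \<in> p"
      using Suc star_set_mem shift_star_set_mem by blast+
    then have "hindman_set p A (Suc k) \<in> p"
      using proper_filter_Int[OF p_proper] by (simp add: hindman_seq_def Let_def)
    then show ?case
      using star_set_mem some_mem by (simp add: hindman_seq_def)
  qed
qed

lemma sum_hindman_seq_mem:
  assumes "A \<in> p" "finite I" "I \<noteq> {}" "\<forall>i\<in>I. k \<le> i"
  shows "sum (hindman_seq p A) I \<in> hindman_set p A k"
  using assms(2-4)
proof (induction "card I" arbitrary: I k rule: less_induct)
  case less
  define m where "m = Min I"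
  have m: "m \<in> I" "k \<le> m"
    using less.prems by (simp_all add: m_def)
  have star_subset: "star_set p (hindman_set p A m) \<subseteq> hindman_set p A k"
    using hindman_set_antimono[OF m(2)] by (auto simp: star_set_def)
  have x_m: "hindman_seq p A m \<in> star_set p (hindman_set p A m)"
    using hindman_set_mem[OF assms(1)] by blast
  show ?case
  proof (cases "I = {m}")
    case True
    then show ?thesis
      using x_m star_subset by auto
  next
    case False
    have "\<forall>i\<in>I - {m}. Suc m \<le> i"
      using less.prems(1) by (auto simp: m_def Suc_le_eq order.strict_iff_order)
    moreover have "card (I - {m}) < card I"
      using less.prems(1) m(1) by (rule card_Diff1_less)
    ultimately have "sum (hindman_seq p A) (I - {m}) \<in> hindman_set p A (Suc m)"
      using less.hyps less.prems(1) False m(1) by blast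
    then have "sum (hindman_seq p A) (I - {m}) + hindman_seq p A m \<in> star_set p (hindman_set p A m)"
      using hindman_set_Suc_subset by (auto simp: shift_set_def)
    moreover have "sum (hindman_seq p A) I = hindman_seq p A m + sum (hindman_seq p A) (I - {m})"
      using less.prems(1) m(1) by (simp add: sum.remove)
    ultimately show ?thesis
      using star_subset by (auto simp: add.commute)
  qed
qed

end

lemma finite_sums_in_idempotent:
  assumes "ultrafilter p" "uf_plus p p = p" "A \<in> p"
  shows "\<exists>x::nat \<Rightarrow> nat. \<forall>I. finite I \<and> I \<noteq> {} \<longrightarrow> sum x I \<in> A"
  using sum_hindman_seq_mem[OF assms, where k = 0] by (intro exI[of _ "hindman_seq p A"]) simp

theorem hindman:
  fixes c :: "nat \<Rightarrow> 'c"
  assumes "finite C" "\<And>n. 0 < n \<Longrightarrow> c n \<in> C"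
  shows "\<exists>col\<in>C. \<exists>x::nat \<Rightarrow> nat. (\<forall>i. 0 < x i) \<and> (\<forall>I. finite I \<and> I \<noteq> {} \<longrightarrow> c (sum x I) = col)"
proof -
  obtain p where p: "ultrafilter p" "cofinite_sets \<subseteq> p" "uf_plus p p = p"
    by (rule idempotent_ultrafilter_exists)
  have "- {n::nat. 0 < n} = {0}"
    by auto
  then have "{n. 0 < n} \<in> p"
    using p(2) by (auto simp: cofinite_sets_def)
  moreover have "{n. 0 < n} = (\<Union>col\<in>C. {n. 0 < n \<and> c n = col})"
    using assms(2) by auto
  ultimately have "(\<Union>col\<in>C. {n. 0 < n \<and> c n = col}) \<in> p"
    by simp
  then obtain col where col: "col \<in> C" and A: "{n. 0 < n \<and> c n = col} \<in> p"
    by (rule ultrafilter_finite_UN[OF p(1) assms(1)])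
  obtain x :: "nat \<Rightarrow> nat" where x: "\<forall>I. finite I \<and> I \<noteq> {} \<longrightarrow> sum x I \<in> {n. 0 < n \<and> c n = col}"
    using finite_sums_in_idempotent[OF p(1,3) A] by blast
  have "0 < x i" for i
    using x[rule_format, of "{i}"] by simp
  moreover have "\<forall>I. finite I \<and> I \<noteq> {} \<longrightarrow> c (sum x I) = col"
    using x by blast
  ultimately show ?thesis
    using col by blast
qed

section \<open>Blocks in Bernoulli sequences\<close>

context sequence_space
begin

lemma prob_all_blocks_differ:
  assumes a: "{a} \<in> sets M"
  shows "P.prob {x \<in> space S. \<forall>t<T. \<exists>i<j. x (j * t + i) \<noteq> a} = (1 - M.prob {a} ^ j) ^ T"
proof -
  define N where "N T = {x \<in> space S. \<forall>t<T. \<exists>i<j. x (j * t + i) \<noteq> a}" for T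
  have N_sets: "N T \<in> sets S" for T
    unfolding N_def using a by measurable
  text \<open>Splitting off the first block of length \<open>j\<close> factors the product measure, which makes
    the events on disjoint blocks independent.\<close>
  have split: "(\<lambda>(x, x'). comb_seq j x x') -` N (Suc T) \<inter> space (S \<Otimes>\<^sub>M S) = N 1 \<times> N T" for T
  proof -
    have first: "(\<exists>i<j. comb_seq j x x' i \<noteq> a) \<longleftrightarrow> (\<exists>i<j. x i \<noteq> a)" for x x'
      by (auto simp: comb_seq_less)
    have later: "(\<exists>i<j. comb_seq j x x' (j * Suc t + i) \<noteq> a) \<longleftrightarrow> (\<exists>i<j. x' (j * t + i) \<noteq> a)"
      for x x' t
      using comb_seq_add[of j x x' "j * t + _"] by (simp add: add.commute add.left_commute)
    have "comb_seq j x x' \<in> space S" if "x \<in> space S" "x' \<in> space S" for x x'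
      using measurable_space[OF measurable_comb_seq, of "(x, x')"] that by (simp add: space_pair_measure)
    then show ?thesis
      by (auto simp: N_def space_pair_measure All_less_Suc2 first later comb_seq_less simp del: mult_Suc_right)
  qed
  have N_Suc: "P.prob (N (Suc T)) = P.prob (N 1) * P.prob (N T)" for T
  proof -
    have "emeasure S (N (Suc T))
        = emeasure (S \<Otimes>\<^sub>M S) ((\<lambda>(x, x'). comb_seq j x x') -` N (Suc T) \<inter> space (S \<Otimes>\<^sub>M S))"
      by (subst (1) PiM_comb_seq[of j, symmetric]) (rule emeasure_distr[OF measurable_comb_seq N_sets])
    also have "\<dots> = emeasure S (N 1) * emeasure S (N T)"
      unfolding split by (rule P.emeasure_pair_measure_Times[OF N_sets N_sets])
    finally show ?thesis by (simp add: P.emeasure_eq_measure ennreal_mult'[symmetric])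
  qed
  have "{x \<in> space S. \<forall>i\<in>{..<j}. x i \<in> {a}} = space S - N 1"
    by (auto simp: N_def)
  moreover have "emeasure S {x \<in> space S. \<forall>i\<in>{..<j}. x i \<in> {a}} = (\<Prod>i\<in>{..<j}. emeasure M {a})"
    by (rule emeasure_PiM_Collect) (use a in auto)
  ultimately have "P.prob (space S - N 1) = M.prob {a} ^ j"
    by (simp add: P.emeasure_eq_measure M.emeasure_eq_measure ennreal_power)
  then have N_1: "P.prob (N 1) = 1 - M.prob {a} ^ j"
    using P.prob_compl[OF N_sets[of 1]] by simp
  have "P.prob (N T) = (1 - M.prob {a} ^ j) ^ T"
  proof (induction T)
    case 0
    then show ?case by (simp add: N_def P.prob_space)
  next
    case (Suc T)
    then show ?case by (simp only: N_Suc N_1 power_Suc)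
  qed
  then show ?thesis by (simp add: N_def)
qed

lemma AE_block_occurs:
  assumes a: "{a} \<in> sets M" "M.prob {a} > 0"
  shows "AE x in S. \<exists>i. \<forall>k<j. x (i + k) = a"
proof -
  define Z where "Z = {x \<in> space S. \<forall>t. \<exists>i<j. x (j * t + i) \<noteq> a}"
  define q where "q = 1 - M.prob {a} ^ j"
  have q: "0 \<le> q" "q < 1"
    using a M.prob_le_1[of "{a}"] by (auto simp: q_def power_le_one)
  have "P.prob Z \<le> q ^ T" for T
  proof -
    have "P.prob Z \<le> P.prob {x \<in> space S. \<forall>t<T. \<exists>i<j. x (j * t + i) \<noteq> a}"
      using a(1) by (intro P.finite_measure_mono) (auto simp: Z_def)
    then show ?thesis by (simp add: prob_all_blocks_differ[OF a(1)] q_def)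
  qed
  then have "P.prob Z \<le> 0"
    using LIMSEQ_power_zero[of q] q by (intro LIMSEQ_le_const[of "\<lambda>T. q ^ T"]) auto
  moreover have "Z \<in> sets S"
    unfolding Z_def using a(1) by measurable
  ultimately have "Z \<in> null_sets S"
    by (simp add: P.emeasure_eq_measure null_sets_def measure_le_0_iff)
  then show ?thesis
    by (rule AE_I') (auto simp: Z_def)
qed

end

lemma AE_bernoulli_measure_blocks:
  fixes a :: "'a::finite"
  shows "AE x in bernoulli_measure. \<forall>j. \<exists>i. \<forall>k<j. x (i + k) = a"
proof -
  interpret M: prob_space "uniform_count_measure (UNIV :: 'a set)"
    by (rule prob_space_uniform_count_measure) auto
  interpret S: sequence_space "uniform_count_measure (UNIV :: 'a set)"
    by unfold_locales
  have a_sets: "{a} \<in> sets (uniform_count_measure UNIV)"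
    by (simp add: sets_uniform_count_measure)
  have a_pos: "M.prob {a} > 0"
    by (simp add: measure_uniform_count_measure)
  have "AE x in S.S. \<exists>i. \<forall>k<j. x (i + k) = a" for j
    using S.AE_block_occurs[OF a_sets a_pos] .
  then show ?thesis
    unfolding bernoulli_measure_def by (subst AE_all_countable) blast
qed

section \<open>Factorizations of a constant word\<close>

lemma const_in_Omega:
  assumes "\<And>j. \<exists>i. \<forall>k<j. x (i + k) = a"
  shows "(\<lambda>_. a) \<in> Omega x"
proof -
  have "w \<in> Fact x" if "w \<in> Fact (\<lambda>_. a)" for w
  proof -
    from that obtain i where "w \<noteq> []" "w = map (\<lambda>_. a) [i..<i + length w]"
      unfolding Fact_def by blast
    then obtain n where n: "0 < n" "w = replicate n a"
      by (metis length_greater_0_conv length_map length_upt map_replicate_const add_diff_cancel_left')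
    obtain i' where "\<forall>k<n. x (i' + k) = a"
      using assms by blast
    then have "map x [i'..<i' + n] = replicate n a"
      by (simp add: list_eq_iff_nth_eq)
    then show ?thesis
      using n unfolding Fact_def by (auto intro: exI[of _ i'])
  qed
  then show ?thesis
    by (auto simp: Omega_def)
qed

lemma is_factorization_replicate:
  assumes "\<And>n. 0 < l n"
  shows "is_factorization (\<lambda>_. a) (\<lambda>n. replicate (l n) a)"
  using assms by (simp add: is_factorization_def map_replicate_const)

lemma concat_map_replicate:
  "concat (map (\<lambda>i. replicate (f i) a) xs) = replicate (sum_list (map f xs)) a"
  by (induction xs) (simp_all add: replicate_add)

lemma ultra_monochromatic_replicate:
  assumes "col \<in> C" "\<And>I. finite I \<Longrightarrow> I \<noteq> {} \<Longrightarrow> \<phi> (replicate (sum l I) a) = col"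
  shows "ultra_monochromatic \<phi> C (\<lambda>n. replicate (l n) a)"
  unfolding ultra_monochromatic_def
proof (intro bexI[OF _ assms(1)] allI impI)
  fix k and n :: "nat \<Rightarrow> nat" and \<sigma>
  assume k: "1 \<le> k" and n: "strict_mono_on {1..k} n" and \<sigma>: "\<sigma> permutes {1..k}"
  have "sum_list (map (\<lambda>i. l (n (\<sigma> i))) [1..<k+1]) = (\<Sum>i\<in>{1..<k+1}. l (n (\<sigma> i)))"
    by (simp only: sum_set_upt_conv_sum_list_nat[symmetric] set_upt)
  also have "\<dots> = (\<Sum>i\<in>{1..k}. l (n (\<sigma> i)))"
    by (rule sum.cong) auto
  also have "\<dots> = (\<Sum>i\<in>{1..k}. l (n i))"
    using sum.permute[OF \<sigma>, of "\<lambda>i. l (n i)"] by (simp add: comp_def)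
  also have "\<dots> = sum l (n ` {1..k})"
    using sum.reindex[OF strict_mono_on_imp_inj_on[OF n], of l] by (simp add: comp_def)
  finally have "concat (map (\<lambda>i. replicate (l (n (\<sigma> i))) a) [1..<k+1]) = replicate (sum l (n ` {1..k})) a"
    by (simp add: concat_map_replicate)
  moreover have "n ` {1..k} \<noteq> {}"
    using k by simp
  ultimately show "\<phi> (concat (map (\<lambda>i. replicate (l (n (\<sigma> i))) a) [1..<k+1])) = col"
    using assms(2) by simp
qed

theorem corollary2p7:
  fixes \<phi> :: "'a::finite list \<Rightarrow> 'c" and C :: "'c set"
  assumes "finite C"
    and "\<forall>w. w \<noteq> [] \<longrightarrow> \<phi> w \<in> C"
  shows "AE x in bernoulli_measure.
           \<exists>y\<in>Omega x. \<exists>V. is_factorization y V \<and> ultra_monochromatic \<phi> C V"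
proof -
  define a :: 'a where "a = undefined"
  have colours: "\<phi> (replicate n a) \<in> C" if "0 < n" for n
    using assms(2) that by simp
  obtain col and l :: "nat \<Rightarrow> nat" where col: "col \<in> C" and l: "\<forall>i. 0 < l i"
    and monochromatic: "\<forall>I. finite I \<and> I \<noteq> {} \<longrightarrow> \<phi> (replicate (sum l I) a) = col"
    using hindman[where c = "\<lambda>n. \<phi> (replicate n a)", OF assms(1) colours] by blast
  have "is_factorization (\<lambda>_. a) (\<lambda>n. replicate (l n) a)"
    using l by (intro is_factorization_replicate) blast
  moreover have "ultra_monochromatic \<phi> C (\<lambda>n. replicate (l n) a)"
    using col monochromatic by (intro ultra_monochromatic_replicate) blast+
  moreover have "(\<lambda>_. a) \<in> Omega x" if "\<forall>j. \<exists>i. \<forall>k<j. x (i + k) = a" for x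
    using that by (intro const_in_Omega) blast
  ultimately have "\<exists>y\<in>Omega x. \<exists>V. is_factorization y V \<and> ultra_monochromatic \<phi> C V"
    if "\<forall>j. \<exists>i. \<forall>k<j. x (i + k) = a" for x
    using that by blast
  then show ?thesis
    by (rule eventually_mono[OF AE_bernoulli_measure_blocks[of a]])
qed

end
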